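(* Let $\mathbb{F}$ be a field of characteristic not $2$ and let $\Phi: M_n(\mathbb{F}) \to M_r(\mathbb{F})$ be an additive Jordan homomorphism. Then $\Phi$ preserves double zero products, i.e. $\Phi(A)\Phi(B) = \Phi(B)\Phi(A) = 0$ whenever $AB = BA = 0$. If $\mathbb{F} = \mathbb{R}$ or $\mathbb{C}$, then moreover $\Phi(A)\Phi(B) = 0$ whenever $AB = 0$ and $A,B$ are both self-adjoint, or both symmetric.
   Context: An additive map $\Phi$ is a Jordan homomorphism if $\Phi(AB+BA) = \Phi(A)\Phi(B)+\Phi(B)\Phi(A)$ for all $A,B$. Self-adjoint means $A^*=A$ (conjugate transpose), symmetric means $A^{\mathrm t}=A$. *)

theory Defs
  imports "HOL-Analysis.Analysis"
begin

definition additive_map :: "('a::semiring_1^'n^'n \<Rightarrow> 'a^'r^'r) \<Rightarrow> bool" where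
  "additive_map \<Phi> \<longleftrightarrow> (\<forall>A B. \<Phi> (A + B) = \<Phi> A + \<Phi> B)"

definition jordan_hom :: "('a::semiring_1^'n^'n \<Rightarrow> 'a^'r^'r) \<Rightarrow> bool" where
  "jordan_hom \<Phi> \<longleftrightarrow> additive_map \<Phi> \<and>
     (\<forall>A B. \<Phi> (A ** B + B ** A) = \<Phi> A ** \<Phi> B + \<Phi> B ** \<Phi> A)"

definition conj_transpose :: "complex^'n^'m \<Rightarrow> complex^'m^'n" where
  "conj_transpose A = (\<chi> i j. cnj (A $ j $ i))"

definition self_adjoint :: "complex^'n^'n \<Rightarrow> bool" where
  "self_adjoint A \<longleftrightarrow> conj_transpose A = A"

definition symmetric_mat :: "'a^'n^'n \<Rightarrow> bool" where
  "symmetric_mat A \<longleftrightarrow> transpose A = A"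

end

theory Submission
  imports Defs
begin

text \<open>
  Following Jacobson and Rickart, the images \<open>e\<^sub>i = \<Phi> (E\<^sub>i\<^sub>i)\<close> of the diagonal matrix units are
  orthogonal idempotents summing to \<open>\<Phi> 1\<close>, which acts as a unit on the image of \<open>\<Phi>\<close>. For
  \<open>n \<ge> 2\<close> the corners \<open>e\<^sub>i \<Phi> (E\<^sub>i\<^sub>j) e\<^sub>j\<close> and \<open>e\<^sub>j \<Phi> (E\<^sub>i\<^sub>j) e\<^sub>i\<close> assemble into two mutually
  annihilating systems of matrix units \<open>h\<^sub>i\<^sub>j\<close> and \<open>g\<^sub>i\<^sub>j\<close> (the homomorphic and the
  anti-homomorphic part of \<open>\<Phi>\<close>), and \<open>D\<^sub>i c = \<Phi> (c E\<^sub>i\<^sub>i)\<close> is multiplicative and commutes with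
  them. Consequently the \<open>(i, k)\<close> corner of \<open>\<Phi> A \<Phi> B\<close> is
  \<open>D\<^sub>i ((A B)\<^sub>i\<^sub>k) h\<^sub>i\<^sub>k + D\<^sub>i ((B A)\<^sub>k\<^sub>i) g\<^sub>k\<^sub>i\<close>, so \<open>A B = B A = 0\<close> kills every corner and hence
  \<open>\<Phi> A \<Phi> B\<close>; for \<open>n = 1\<close> already \<open>A = 0\<close> or \<open>B = 0\<close>. For symmetric or self-adjoint matrices,
  \<open>A B = 0\<close> implies \<open>B A = 0\<close> by transposition, which reduces the second claim to the first.
\<close>

lemma matrix_add_rdistrib: "((A::'a::semiring_1^'n^'m) + B) ** C = A ** C + B ** C"
  by (simp add: matrix_matrix_mult_def vec_eq_iff sum.distrib[symmetric] distrib_right)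

lemma matrix_neg_left: "(- (A::'a::ring_1^'n^'m)) ** B = - (A ** B)"
  by (simp add: matrix_matrix_mult_def vec_eq_iff sum_negf[symmetric])

lemma matrix_neg_right: "(A::'a::ring_1^'n^'m) ** (- B) = - (A ** B)"
  by (simp add: matrix_matrix_mult_def vec_eq_iff sum_negf[symmetric])

lemma matrix_diff_rdistrib: "((A::'a::ring_1^'n^'m) - B) ** C = A ** C - B ** C"
  by (simp add: matrix_matrix_mult_def vec_eq_iff sum_subtractf[symmetric] left_diff_distrib)

lemma matrix_diff_ldistrib: "(A::'a::ring_1^'n^'m) ** (B - C) = A ** B - A ** C"
  by (simp add: matrix_matrix_mult_def vec_eq_iff sum_subtractf[symmetric] right_diff_distrib)

lemma matrix_sum_mult_distrib: "sum F S ** (A::'a::semiring_1^'n^'m) = (\<Sum>x\<in>S. F x ** A)"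
  by (induct S rule: infinite_finite_induct) (auto simp: matrix_add_rdistrib)

lemma matrix_mult_sum_distrib: "(A::'a::semiring_1^'n^'m) ** sum F S = (\<Sum>x\<in>S. A ** F x)"
  by (induct S rule: infinite_finite_induct) (auto simp: matrix_add_ldistrib)

lemmas matrix_ring_simps = matrix_add_ldistrib matrix_add_rdistrib matrix_mul_assoc
  matrix_neg_left matrix_neg_right matrix_diff_rdistrib matrix_diff_ldistrib

lemma matrix_mult_component:
  "((A::'a::semiring_1^'n^'m) ** B) $ i $ k = (\<Sum>j\<in>UNIV. A $ i $ j * B $ j $ k)"
  by (simp add: matrix_matrix_mult_def)

lemma matrix_double_eq_0:
  assumes "(2::'a::field) \<noteq> 0" and "(X::'a^'n^'m) + X = 0"
  shows "X = 0"
proof -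
  have "2 * X $ i $ j = 0" for i j
    using arg_cong[OF assms(2), of "\<lambda>M. M $ i $ j"]
    by (simp only: vector_add_component mult_2 zero_index)
  with assms(1) show ?thesis by (simp add: vec_eq_iff)
qed

definition matrix_unit :: "'n::finite \<Rightarrow> 'n \<Rightarrow> 'a::semiring_1 \<Rightarrow> 'a^'n^'n" where
  "matrix_unit i j c = (\<chi> a b. if a = i \<and> b = j then c else 0)"

lemma matrix_unit_component: "matrix_unit p q c $ a $ b = (if a = p \<and> b = q then c else 0)"
  by (simp add: matrix_unit_def)

lemma matrix_unit_mult:
  "matrix_unit i j c ** matrix_unit k l d = (if j = k then matrix_unit i l (c * d) else 0)"
proof -
  have "(\<Sum>m\<in>UNIV. (if a = i \<and> m = j then c else 0) * (if m = k \<and> b = l then d else 0))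
      = (\<Sum>m\<in>UNIV. if m = j then (if a = i \<and> j = k \<and> b = l then c * d else 0) else 0)" for a b
    by (rule sum.cong) auto
  then show ?thesis
    by (auto simp: vec_eq_iff matrix_mult_component matrix_unit_component)
qed

lemma matrix_unit_add: "matrix_unit i j (c + d) = matrix_unit i j c + matrix_unit i j d"
  by (auto simp: vec_eq_iff matrix_unit_def)

lemma matrix_unit_zero [simp]: "matrix_unit i j 0 = 0"
  by (auto simp: vec_eq_iff matrix_unit_def)

lemma matrix_unit_sum: "matrix_unit i j (sum f S) = (\<Sum>x\<in>S. matrix_unit i j (f x))"
  by (induct S rule: infinite_finite_induct) (auto simp: matrix_unit_add)

lemma sum_sum_delta:
  fixes F :: "'n::finite \<Rightarrow> 'm::finite \<Rightarrow> 'b::comm_monoid_add"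
  shows "(\<Sum>p\<in>UNIV. \<Sum>q\<in>UNIV. if a = p \<and> b = q then F p q else 0) = F a b"
proof -
  have "(\<Sum>q\<in>UNIV. if a = p \<and> b = q then F p q else 0) = (if a = p then F p b else 0)" for p
    by (cases "a = p") simp_all
  then show ?thesis by simp
qed

lemma matrix_eq_sum_matrix_units:
  "(A::'a::semiring_1^'n::finite^'n) = (\<Sum>p\<in>UNIV. \<Sum>q\<in>UNIV. matrix_unit p q (A $ p $ q))"
  using sum_sum_delta[where F = "\<lambda>p q. A $ p $ q"]
  by (simp add: vec_eq_iff matrix_unit_component)

lemma mat_1_eq_sum_matrix_units:
  "(mat 1 :: 'a::semiring_1^'n::finite^'n) = (\<Sum>i\<in>UNIV. matrix_unit i i 1)"
proof -
  have "(\<Sum>i\<in>UNIV. if a = i \<and> b = i then 1 else 0) = (if a = b then 1 else (0::'a))" for a b :: 'n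
    by (cases "a = b") (auto intro: sum.neutral)
  then show ?thesis
    by (simp add: vec_eq_iff matrix_unit_component mat_def)
qed

locale field_jordan_hom =
  fixes \<phi> :: "'a::field^'n::finite^'n \<Rightarrow> 'a^'r::finite^'r"
  assumes char_not_2: "(2::'a) \<noteq> 0"
    and jordan_hom: "jordan_hom \<phi>"
begin

lemma map_add: "\<phi> (A + B) = \<phi> A + \<phi> B"
  using jordan_hom by (simp add: jordan_hom_def additive_map_def)

lemma map_jordan: "\<phi> (A ** B + B ** A) = \<phi> A ** \<phi> B + \<phi> B ** \<phi> A"
  using jordan_hom by (simp add: jordan_hom_def)

lemma map_zero [simp]: "\<phi> 0 = 0"
  using map_add[of 0 0] by simp

lemma map_neg: "\<phi> (- A) = - \<phi> A"
  using map_add[of A "- A"] by (simp add: minus_unique)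

lemma map_sum: "\<phi> (sum F S) = (\<Sum>x\<in>S. \<phi> (F x))"
  by (induct S rule: infinite_finite_induct) (auto simp: map_add)

lemma eq_of_double_eq:
  assumes "X + X = Y + Y"
  shows "X = (Y::'a^'r^'r)"
proof -
  from assms have "(X - Y) + (X - Y) = 0"
    by (simp only: add_diff_add[symmetric] diff_self)
  from matrix_double_eq_0[OF char_not_2 this] show ?thesis
    by (simp only: right_minus_eq)
qed

lemma map_square: "\<phi> (A ** A) = \<phi> A ** \<phi> A"
  by (rule eq_of_double_eq) (use map_jordan[of A A] map_add[of "A ** A" "A ** A"] in simp)

lemma map_triple: "\<phi> (A ** B ** A) = \<phi> A ** \<phi> B ** \<phi> A"
proof (rule eq_of_double_eq)
  let ?C = "A ** B + B ** A"
  \<comment> \<open>Expand the Jordan product of A with A B + B A in two ways.\<close>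
  have expand: "A ** ?C + ?C ** A = (A ** B ** A + A ** B ** A) + ((A ** A) ** B + B ** (A ** A))"
    by (simp only: matrix_ring_simps add_ac)
  have "\<phi> (A ** ?C + ?C ** A) =
      (\<phi> (A ** B ** A) + \<phi> (A ** B ** A)) + (\<phi> A ** \<phi> A ** \<phi> B + \<phi> B ** \<phi> A ** \<phi> A)"
    unfolding expand map_add[of "A ** B ** A + A ** B ** A"] map_add[of "A ** B ** A" "A ** B ** A"]
      map_jordan[of "A ** A" B] map_square
    by (simp only: matrix_mul_assoc)
  moreover have "\<phi> (A ** ?C + ?C ** A) =
      (\<phi> A ** \<phi> B ** \<phi> A + \<phi> A ** \<phi> B ** \<phi> A) + (\<phi> A ** \<phi> A ** \<phi> B + \<phi> B ** \<phi> A ** \<phi> A)"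
    unfolding map_jordan[of A ?C] map_jordan[of A B] by (simp only: matrix_ring_simps add_ac)
  ultimately show "\<phi> (A ** B ** A) + \<phi> (A ** B ** A) = \<phi> A ** \<phi> B ** \<phi> A + \<phi> A ** \<phi> B ** \<phi> A"
    by simp
qed

lemma map_idempotent: "P ** P = P \<Longrightarrow> \<phi> P ** \<phi> P = \<phi> P"
  using map_square by metis

lemma map_idempotent_orthogonal:
  assumes "P ** P = P" "P ** X = 0" "X ** P = 0"
  shows "\<phi> P ** \<phi> X = 0" "\<phi> X ** \<phi> P = 0"
proof -
  have idem: "\<phi> P ** \<phi> P = \<phi> P" using map_idempotent assms by simp
  have anti: "\<phi> P ** \<phi> X + \<phi> X ** \<phi> P = 0"
    using map_jordan[of P X] assms by simp
  have sandwich: "\<phi> P ** \<phi> X ** \<phi> P = 0" using map_triple[of P X] assms by simp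
  have "\<phi> P ** \<phi> X = \<phi> P ** (\<phi> P ** \<phi> X)"
    using idem by (simp add: matrix_mul_assoc)
  also have "\<dots> = \<phi> P ** (- (\<phi> X ** \<phi> P))"
    using anti by (metis add.commute add_eq_0_iff)
  also have "\<dots> = 0" using sandwich by (simp add: matrix_ring_simps)
  finally show "\<phi> P ** \<phi> X = 0" .
  with anti show "\<phi> X ** \<phi> P = 0" by simp
qed

lemma map_mat_1_left: "\<phi> (mat 1) ** \<phi> X = \<phi> X"
  and map_mat_1_right: "\<phi> X ** \<phi> (mat 1) = \<phi> X"
proof -
  let ?U = "\<phi> (mat 1)"
  have sandwich: "?U ** \<phi> X ** ?U = \<phi> X" using map_triple[of "mat 1" X] by simp
  have idem: "?U ** ?U = ?U" by (rule map_idempotent) simp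
  have "?U ** \<phi> X = ?U ** (?U ** \<phi> X ** ?U)" by (simp only: sandwich)
  also have "\<dots> = (?U ** ?U) ** \<phi> X ** ?U" by (simp only: matrix_mul_assoc)
  finally show "?U ** \<phi> X = \<phi> X" by (simp only: idem sandwich)
  have "\<phi> X ** ?U = (?U ** \<phi> X ** ?U) ** ?U" by (simp only: sandwich)
  also have "\<dots> = ?U ** \<phi> X ** (?U ** ?U)" by (simp only: matrix_mul_assoc)
  finally show "\<phi> X ** ?U = \<phi> X" by (simp only: idem sandwich)
qed

abbreviation map_unit :: "'n \<Rightarrow> 'n \<Rightarrow> 'a \<Rightarrow> 'a^'r^'r" where
  "map_unit i j c \<equiv> \<phi> (matrix_unit i j c)"

definition diag_idem :: "'n \<Rightarrow> 'a^'r^'r" where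
  "diag_idem i = map_unit i i 1"

definition diag_map :: "'n \<Rightarrow> 'a \<Rightarrow> 'a^'r^'r" where
  "diag_map i c = map_unit i i c"

definition hom_corner :: "'n \<Rightarrow> 'n \<Rightarrow> 'a \<Rightarrow> 'a^'r^'r" where
  "hom_corner i j c = diag_idem i ** map_unit i j c ** diag_idem j"

definition anti_corner :: "'n \<Rightarrow> 'n \<Rightarrow> 'a \<Rightarrow> 'a^'r^'r" where
  "anti_corner i j c = diag_idem j ** map_unit i j c ** diag_idem i"

definition hom_off :: "'n \<Rightarrow> 'n \<Rightarrow> 'a^'r^'r" where
  "hom_off i j = hom_corner i j 1"

definition anti_off :: "'n \<Rightarrow> 'n \<Rightarrow> 'a^'r^'r" where
  "anti_off i j = anti_corner i j 1"

lemma map_mat_1_eq_sum: "\<phi> (mat 1) = (\<Sum>i\<in>UNIV. diag_idem i)"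
  by (simp only: mat_1_eq_sum_matrix_units map_sum diag_idem_def)

text \<open>
  The \<open>[simp]\<close> variants with an extra left factor \<open>X\<close> let the simplifier rewrite inside
  left-associated products.
\<close>

lemma diag_idem_idempotent [simp]:
  "diag_idem i ** diag_idem i = diag_idem i"
  "X ** diag_idem i ** diag_idem i = X ** diag_idem i"
proof -
  show idem: "diag_idem i ** diag_idem i = diag_idem i"
    unfolding diag_idem_def by (rule map_idempotent) (simp add: matrix_unit_mult)
  show "X ** diag_idem i ** diag_idem i = X ** diag_idem i"
    by (metis idem matrix_mul_assoc)
qed

lemma diag_idem_orthogonal [simp]:
  "i \<noteq> j \<Longrightarrow> diag_idem i ** diag_idem j = 0"
  "i \<noteq> j \<Longrightarrow> X ** diag_idem i ** diag_idem j = 0"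
proof -
  assume "i \<noteq> j"
  then show orth: "diag_idem i ** diag_idem j = 0"
    unfolding diag_idem_def by (intro map_idempotent_orthogonal) (auto simp: matrix_unit_mult)
  show "X ** diag_idem i ** diag_idem j = 0"
    by (metis orth matrix_mul_assoc times0_right)
qed

lemma diag_idem_annihilates:
  "k \<noteq> p \<Longrightarrow> k \<noteq> q \<Longrightarrow> diag_idem k ** map_unit p q c = 0"
  "k \<noteq> p \<Longrightarrow> k \<noteq> q \<Longrightarrow> map_unit p q c ** diag_idem k = 0"
  unfolding diag_idem_def by (intro map_idempotent_orthogonal; auto simp: matrix_unit_mult)+

lemma diag_idem_annihilates_left_mult [simp]:
  "k \<noteq> p \<Longrightarrow> k \<noteq> q \<Longrightarrow> X ** diag_idem k ** map_unit p q c = 0"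
  "k \<noteq> p \<Longrightarrow> k \<noteq> q \<Longrightarrow> X ** map_unit p q c ** diag_idem k = 0"
  using diag_idem_annihilates by (metis matrix_mul_assoc times0_right)+

lemma diag_map_corner [simp]:
  "diag_idem i ** diag_map i c = diag_map i c"
  "diag_map i c ** diag_idem i = diag_map i c"
  "X ** diag_idem i ** diag_map i c = X ** diag_map i c"
  "X ** diag_map i c ** diag_idem i = X ** diag_map i c"
proof -
  have sandwich: "diag_idem i ** diag_map i c ** diag_idem i = diag_map i c"
    using map_triple[of "matrix_unit i i 1" "matrix_unit i i c"]
    by (simp add: matrix_unit_mult diag_map_def diag_idem_def)
  show left: "diag_idem i ** diag_map i c = diag_map i c"
    by (metis sandwich diag_idem_idempotent(1) matrix_mul_assoc)
  show right: "diag_map i c ** diag_idem i = diag_map i c"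
    by (metis sandwich diag_idem_idempotent(2))
  show "X ** diag_idem i ** diag_map i c = X ** diag_map i c"
    by (metis left matrix_mul_assoc)
  show "X ** diag_map i c ** diag_idem i = X ** diag_map i c"
    by (metis right matrix_mul_assoc)
qed

lemma diag_map_orthogonal [simp]:
  "j \<noteq> i \<Longrightarrow> diag_idem j ** diag_map i c = 0"
  "j \<noteq> i \<Longrightarrow> diag_map i c ** diag_idem j = 0"
  "j \<noteq> i \<Longrightarrow> X ** diag_idem j ** diag_map i c = 0"
  "j \<noteq> i \<Longrightarrow> X ** diag_map i c ** diag_idem j = 0"
  unfolding diag_map_def using diag_idem_annihilates diag_idem_annihilates_left_mult by auto

lemma diag_map_zero [simp]: "diag_map i 0 = 0"
  by (simp add: diag_map_def)

lemma diag_map_sum: "diag_map i (sum f S) = (\<Sum>x\<in>S. diag_map i (f x))"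
  by (simp add: diag_map_def matrix_unit_sum map_sum)

lemma off_diag_split:
  assumes "i \<noteq> j"
  shows "map_unit i j c = diag_idem i ** map_unit i j c + map_unit i j c ** diag_idem i"
    and "map_unit i j c = diag_idem j ** map_unit i j c + map_unit i j c ** diag_idem j"
  using map_jordan[of "matrix_unit i i 1" "matrix_unit i j c"]
    map_jordan[of "matrix_unit j j 1" "matrix_unit i j c"] assms
  by (simp_all add: matrix_unit_mult diag_idem_def add.commute)

lemma off_diag_corner:
  assumes "i \<noteq> j"
  shows "diag_idem i ** map_unit i j c = hom_corner i j c"
    and "map_unit i j c ** diag_idem j = hom_corner i j c"
    and "diag_idem j ** map_unit i j c = anti_corner i j c"
    and "map_unit i j c ** diag_idem i = anti_corner i j c"
proof -
  note split = off_diag_split[OF assms, of c]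
  have "diag_idem i ** map_unit i j c =
      diag_idem i ** (diag_idem j ** map_unit i j c + map_unit i j c ** diag_idem j)"
    using split(2) by (rule arg_cong)
  then show "diag_idem i ** map_unit i j c = hom_corner i j c"
    using assms by (simp add: matrix_ring_simps hom_corner_def)
  have "map_unit i j c ** diag_idem j =
      (diag_idem i ** map_unit i j c + map_unit i j c ** diag_idem i) ** diag_idem j"
    using split(1) by (rule arg_cong)
  then show "map_unit i j c ** diag_idem j = hom_corner i j c"
    using assms by (simp add: matrix_ring_simps hom_corner_def)
  have "diag_idem j ** map_unit i j c =
      diag_idem j ** (diag_idem i ** map_unit i j c + map_unit i j c ** diag_idem i)"
    using split(1) by (rule arg_cong)
  then show "diag_idem j ** map_unit i j c = anti_corner i j c"
    using assms by (simp add: matrix_ring_simps anti_corner_def)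
  have "map_unit i j c ** diag_idem i =
      (diag_idem j ** map_unit i j c + map_unit i j c ** diag_idem j) ** diag_idem i"
    using split(2) by (rule arg_cong)
  then show "map_unit i j c ** diag_idem i = anti_corner i j c"
    using assms by (simp add: matrix_ring_simps anti_corner_def)
qed

lemma off_diag_corner_left_mult [simp]:
  "i \<noteq> j \<Longrightarrow> X ** diag_idem i ** map_unit i j c = X ** hom_corner i j c"
  "i \<noteq> j \<Longrightarrow> X ** map_unit i j c ** diag_idem j = X ** hom_corner i j c"
  "i \<noteq> j \<Longrightarrow> X ** diag_idem j ** map_unit i j c = X ** anti_corner i j c"
  "i \<noteq> j \<Longrightarrow> X ** map_unit i j c ** diag_idem i = X ** anti_corner i j c"
  using off_diag_corner by (metis matrix_mul_assoc)+

lemma hom_corner_corner [simp]: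
  "i \<noteq> j \<Longrightarrow> diag_idem i ** hom_corner i j c = hom_corner i j c"
  "i \<noteq> j \<Longrightarrow> hom_corner i j c ** diag_idem j = hom_corner i j c"
  "i \<noteq> j \<Longrightarrow> X ** diag_idem i ** hom_corner i j c = X ** hom_corner i j c"
  "i \<noteq> j \<Longrightarrow> X ** hom_corner i j c ** diag_idem j = X ** hom_corner i j c"
  unfolding hom_corner_def by (simp_all add: matrix_ring_simps del: off_diag_corner_left_mult)

lemma anti_corner_corner [simp]:
  "i \<noteq> j \<Longrightarrow> diag_idem j ** anti_corner i j c = anti_corner i j c"
  "i \<noteq> j \<Longrightarrow> anti_corner i j c ** diag_idem i = anti_corner i j c"
  "i \<noteq> j \<Longrightarrow> X ** diag_idem j ** anti_corner i j c = X ** anti_corner i j c"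
  "i \<noteq> j \<Longrightarrow> X ** anti_corner i j c ** diag_idem i = X ** anti_corner i j c"
  unfolding anti_corner_def by (simp_all add: matrix_ring_simps del: off_diag_corner_left_mult)

lemma hom_corner_orthogonal [simp]:
  "k \<noteq> i \<Longrightarrow> diag_idem k ** hom_corner i j c = 0"
  "k \<noteq> j \<Longrightarrow> hom_corner i j c ** diag_idem k = 0"
  "k \<noteq> i \<Longrightarrow> X ** diag_idem k ** hom_corner i j c = 0"
  "k \<noteq> j \<Longrightarrow> X ** hom_corner i j c ** diag_idem k = 0"
  unfolding hom_corner_def by (simp_all add: matrix_ring_simps del: off_diag_corner_left_mult)

lemma anti_corner_orthogonal [simp]:
  "k \<noteq> j \<Longrightarrow> diag_idem k ** anti_corner i j c = 0"
  "k \<noteq> i \<Longrightarrow> anti_corner i j c ** diag_idem k = 0"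
  "k \<noteq> j \<Longrightarrow> X ** diag_idem k ** anti_corner i j c = 0"
  "k \<noteq> i \<Longrightarrow> X ** anti_corner i j c ** diag_idem k = 0"
  unfolding anti_corner_def by (simp_all add: matrix_ring_simps del: off_diag_corner_left_mult)

lemma hom_corner_diag_left:
  assumes "i \<noteq> j"
  shows "hom_corner i j c = diag_map i c ** hom_off i j"
proof -
  have jordan: "map_unit i j c =
      diag_map i c ** map_unit i j 1 + map_unit i j 1 ** diag_map i c"
    using map_jordan[of "matrix_unit i i c" "matrix_unit i j 1"] assms
    by (simp add: matrix_unit_mult diag_map_def)
  have "hom_corner i j c =
      diag_idem i ** (diag_map i c ** map_unit i j 1 + map_unit i j 1 ** diag_map i c) ** diag_idem j"
    unfolding hom_corner_def jordan ..
  also have "\<dots> = diag_map i c ** hom_off i j"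
    using assms by (simp add: matrix_ring_simps off_diag_corner hom_off_def)
  finally show ?thesis .
qed

lemma hom_corner_diag_right:
  assumes "i \<noteq> j"
  shows "hom_corner i j c = hom_off i j ** diag_map j c"
proof -
  have jordan: "map_unit i j c =
      map_unit i j 1 ** diag_map j c + diag_map j c ** map_unit i j 1"
    using map_jordan[of "matrix_unit i j 1" "matrix_unit j j c"] assms
    by (simp add: matrix_unit_mult diag_map_def)
  have "hom_corner i j c =
      diag_idem i ** (map_unit i j 1 ** diag_map j c + diag_map j c ** map_unit i j 1) ** diag_idem j"
    unfolding hom_corner_def jordan ..
  also have "\<dots> = hom_off i j ** diag_map j c"
    using assms by (simp add: matrix_ring_simps off_diag_corner hom_off_def)
  finally show ?thesis .
qed

lemma anti_corner_diag_left:
  assumes "i \<noteq> j"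
  shows "anti_corner i j c = diag_map j c ** anti_off i j"
proof -
  have jordan: "map_unit i j c =
      diag_map j c ** map_unit i j 1 + map_unit i j 1 ** diag_map j c"
    using map_jordan[of "matrix_unit j j c" "matrix_unit i j 1"] assms
    by (simp add: matrix_unit_mult diag_map_def add.commute)
  have "anti_corner i j c =
      diag_idem j ** (diag_map j c ** map_unit i j 1 + map_unit i j 1 ** diag_map j c) ** diag_idem i"
    unfolding anti_corner_def jordan ..
  also have "\<dots> = diag_map j c ** anti_off i j"
    using assms by (simp add: matrix_ring_simps off_diag_corner anti_off_def)
  finally show ?thesis .
qed

lemma anti_corner_diag_right:
  assumes "i \<noteq> j"
  shows "anti_corner i j c = anti_off i j ** diag_map i c"
proof -
  have jordan: "map_unit i j c =
      diag_map i c ** map_unit i j 1 + map_unit i j 1 ** diag_map i c"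
    using map_jordan[of "matrix_unit i i c" "matrix_unit i j 1"] assms
    by (simp add: matrix_unit_mult diag_map_def)
  have "anti_corner i j c =
      diag_idem j ** (diag_map i c ** map_unit i j 1 + map_unit i j 1 ** diag_map i c) ** diag_idem i"
    unfolding anti_corner_def jordan ..
  also have "\<dots> = anti_off i j ** diag_map i c"
    using assms by (simp add: matrix_ring_simps off_diag_corner anti_off_def)
  finally show ?thesis .
qed

lemma hom_corner_mult:
  assumes "i \<noteq> j"
  shows "hom_corner i j (a*b) = hom_corner i j a ** diag_map j b"
proof -
  have jordan: "map_unit i j (a*b) =
      map_unit i j a ** diag_map j b + diag_map j b ** map_unit i j a"
    using map_jordan[of "matrix_unit i j a" "matrix_unit j j b"] assms
    by (simp add: matrix_unit_mult diag_map_def)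
  have "hom_corner i j (a*b) =
      diag_idem i ** (map_unit i j a ** diag_map j b + diag_map j b ** map_unit i j a) ** diag_idem j"
    unfolding hom_corner_def jordan ..
  also have "\<dots> = hom_corner i j a ** diag_map j b"
    using assms by (simp add: matrix_ring_simps off_diag_corner)
  finally show ?thesis .
qed

lemma anti_corner_mult:
  assumes "i \<noteq> j"
  shows "anti_corner j i (a*b) = diag_map i a ** anti_corner j i b"
proof -
  have jordan: "map_unit j i (a*b) =
      map_unit j i b ** diag_map i a + diag_map i a ** map_unit j i b"
    using map_jordan[of "matrix_unit j i b" "matrix_unit i i a"] assms
    by (simp add: matrix_unit_mult diag_map_def mult.commute)
  have "anti_corner j i (a*b) =
      diag_idem i ** (map_unit j i b ** diag_map i a + diag_map i a ** map_unit j i b) ** diag_idem j"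
    unfolding anti_corner_def jordan ..
  also have "\<dots> = diag_map i a ** anti_corner j i b"
    using assms by (simp add: matrix_ring_simps off_diag_corner)
  finally show ?thesis .
qed

lemma diag_idem_decomposition:
  assumes "i \<noteq> j"
  shows "diag_idem i = hom_off i j ** hom_off j i + anti_off j i ** anti_off i j"
proof -
  have jordan: "diag_idem i + diag_idem j =
      map_unit i j 1 ** map_unit j i 1 + map_unit j i 1 ** map_unit i j 1"
    using map_jordan[of "matrix_unit i j 1" "matrix_unit j i 1"] assms
    by (simp add: matrix_unit_mult diag_idem_def map_add)
  have "diag_idem i = diag_idem i ** (diag_idem i + diag_idem j) ** diag_idem i"
    using assms by (simp add: matrix_ring_simps)
  also have "\<dots> =
      diag_idem i ** (map_unit i j 1 ** map_unit j i 1 + map_unit j i 1 ** map_unit i j 1) ** diag_idem i"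
    unfolding jordan ..
  also have "\<dots> = hom_off i j ** hom_off j i + anti_off j i ** anti_off i j"
    using assms by (simp add: matrix_ring_simps off_diag_corner hom_off_def anti_off_def)
  finally show ?thesis .
qed

lemma hom_off_trans:
  assumes "i \<noteq> j" "j \<noteq> k" "i \<noteq> k"
  shows "hom_off i j ** hom_off j k = hom_off i k"
proof -
  have jordan: "map_unit i k 1 =
      map_unit i j 1 ** map_unit j k 1 + map_unit j k 1 ** map_unit i j 1"
    using map_jordan[of "matrix_unit i j 1" "matrix_unit j k 1"] assms
    by (simp add: matrix_unit_mult)
  have "hom_off i k =
      diag_idem i ** (map_unit i j 1 ** map_unit j k 1 + map_unit j k 1 ** map_unit i j 1) ** diag_idem k"
    unfolding hom_off_def hom_corner_def jordan ..
  also have "\<dots> = hom_off i j ** hom_off j k"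
    using assms by (simp add: matrix_ring_simps off_diag_corner hom_off_def diag_idem_annihilates)
  finally show ?thesis ..
qed

lemma anti_off_trans:
  assumes "i \<noteq> j" "j \<noteq> k" "i \<noteq> k"
  shows "anti_off j i ** anti_off k j = anti_off k i"
proof -
  have jordan: "map_unit k i 1 =
      map_unit k j 1 ** map_unit j i 1 + map_unit j i 1 ** map_unit k j 1"
    using map_jordan[of "matrix_unit k j 1" "matrix_unit j i 1"] assms
    by (simp add: matrix_unit_mult)
  have "anti_off k i =
      diag_idem i ** (map_unit k j 1 ** map_unit j i 1 + map_unit j i 1 ** map_unit k j 1) ** diag_idem k"
    unfolding anti_off_def anti_corner_def jordan ..
  also have "\<dots> = anti_off j i ** anti_off k j"
    using assms by (simp add: matrix_ring_simps off_diag_corner anti_off_def diag_idem_annihilates)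
  finally show ?thesis ..
qed

lemma hom_off_triple:
  assumes "i \<noteq> j"
  shows "hom_off i j ** hom_off j i ** hom_off i j = hom_off i j"
proof -
  have triple: "map_unit i j 1 =
      map_unit i j 1 ** map_unit j i 1 ** map_unit i j 1"
    using map_triple[of "matrix_unit i j 1" "matrix_unit j i 1"] by (simp add: matrix_unit_mult)
  have "hom_off i j ** hom_off j i ** hom_off i j =
      hom_corner i j 1 ** (diag_idem j ** map_unit j i 1 ** diag_idem i) ** hom_corner i j 1"
    unfolding hom_off_def hom_corner_def[of j i] ..
  also have "\<dots> = hom_corner i j 1 ** map_unit j i 1 ** hom_corner i j 1"
    using assms by (simp add: matrix_ring_simps del: off_diag_corner_left_mult)
  also have "\<dots> =
      diag_idem i ** (map_unit i j 1 ** map_unit j i 1 ** map_unit i j 1) ** diag_idem j"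
    using assms by (simp add: matrix_ring_simps off_diag_corner)
  also have "\<dots> = hom_off i j" unfolding triple[symmetric] hom_off_def hom_corner_def ..
  finally show ?thesis .
qed

lemma hom_off_anti_off:
  assumes "i \<noteq> j"
  shows "hom_off i j ** anti_off i j = 0" "anti_off i j ** hom_off i j = 0"
proof -
  have square: "map_unit i j 1 ** map_unit i j 1 = 0"
    using map_square[of "matrix_unit i j 1"] assms by (simp add: matrix_unit_mult)
  have "0 =
      diag_idem i ** (map_unit i j 1 ** map_unit i j 1) ** diag_idem i"
    by (simp only: square times0_left times0_right)
  also have "\<dots> = hom_off i j ** anti_off i j"
    using assms by (simp add: matrix_ring_simps off_diag_corner hom_off_def anti_off_def)
  finally show "hom_off i j ** anti_off i j = 0" ..
  have "0 =
      diag_idem j ** (map_unit i j 1 ** map_unit i j 1) ** diag_idem j"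
    by (simp only: square times0_left times0_right)
  also have "\<dots> = anti_off i j ** hom_off i j"
    using assms by (simp add: matrix_ring_simps off_diag_corner hom_off_def anti_off_def)
  finally show "anti_off i j ** hom_off i j = 0" ..
qed

lemma hom_off_anti_off_eq_0:
  assumes "i \<noteq> j" "j \<noteq> k" "i \<noteq> k"
  shows "hom_off i j ** anti_off k j = 0"
proof -
  have jordan: "0 =
      map_unit i j 1 ** map_unit k j 1 + map_unit k j 1 ** map_unit i j 1"
    using map_jordan[of "matrix_unit i j 1" "matrix_unit k j 1"] assms
    by (simp add: matrix_unit_mult)
  have "0 =
      diag_idem i ** (map_unit i j 1 ** map_unit k j 1 + map_unit k j 1 ** map_unit i j 1) ** diag_idem k"
    unfolding jordan[symmetric] by simp
  also have "\<dots> = hom_off i j ** anti_off k j"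
    using assms
    by (simp add: matrix_ring_simps off_diag_corner hom_off_def anti_off_def diag_idem_annihilates)
  finally show ?thesis ..
qed

lemma anti_off_hom_off_eq_0:
  assumes "i \<noteq> j" "j \<noteq> k" "i \<noteq> k"
  shows "anti_off j i ** hom_off j k = 0"
proof -
  have jordan: "0 =
      map_unit j i 1 ** map_unit j k 1 + map_unit j k 1 ** map_unit j i 1"
    using map_jordan[of "matrix_unit j i 1" "matrix_unit j k 1"] assms
    by (simp add: matrix_unit_mult)
  have "0 =
      diag_idem i ** (map_unit j i 1 ** map_unit j k 1 + map_unit j k 1 ** map_unit j i 1) ** diag_idem k"
    unfolding jordan[symmetric] by simp
  also have "\<dots> = anti_off j i ** hom_off j k"
    using assms
    by (simp add: matrix_ring_simps off_diag_corner hom_off_def anti_off_def diag_idem_annihilates)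
  finally show ?thesis ..
qed

end

locale field_jordan_hom_ge_2 = field_jordan_hom \<phi>
  for \<phi> :: "'a::field^'n::finite^'n \<Rightarrow> 'a^'r::finite^'r" +
  assumes two_indices: "\<exists>a b::'n. a \<noteq> b"
begin

definition other :: "'n \<Rightarrow> 'n" where
  "other i = (SOME j. j \<noteq> i)"

lemma other_neq: "other i \<noteq> i"
proof -
  obtain a b :: 'n where "a \<noteq> b" using two_indices by blast
  then have "\<exists>j. j \<noteq> i" by (cases "a = i") auto
  then show ?thesis unfolding other_def by (rule someI_ex)
qed

text \<open>By \<open>hom_diag_eq\<close> the choice of the auxiliary index \<open>other i\<close> is immaterial.\<close>

definition hom_diag :: "'n \<Rightarrow> 'a^'r^'r" where
  "hom_diag i = hom_off i (other i) ** hom_off (other i) i"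

lemma hom_diag_eq:
  assumes "j \<noteq> i"
  shows "hom_diag i = hom_off i j ** hom_off j i"
proof (cases "j = other i")
  case True
  then show ?thesis by (simp add: hom_diag_def)
next
  case False
  let ?k = "other i"
  have k: "?k \<noteq> i" by (rule other_neq)
  have "hom_off i j ** hom_off j i = hom_off i ?k ** hom_off ?k j ** hom_off j i"
    using hom_off_trans[of i ?k j] k False assms by simp
  also have "\<dots> = hom_off i ?k ** (hom_off ?k j ** hom_off j i)"
    by (simp add: matrix_mul_assoc)
  also have "\<dots> = hom_off i ?k ** hom_off ?k i"
    using hom_off_trans[of ?k j i] k False assms by simp
  finally show ?thesis by (simp add: hom_diag_def)
qed

lemma hom_diag_idempotent: "hom_diag i ** hom_diag i = hom_diag i"
proof -
  let ?k = "other i"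
  have "hom_diag i ** hom_diag i = (hom_off i ?k ** hom_off ?k i ** hom_off i ?k) ** hom_off ?k i"
    by (simp add: hom_diag_def matrix_mul_assoc)
  also have "\<dots> = hom_diag i"
    using hom_off_triple[OF not_sym[OF other_neq[of i]]] by (simp add: hom_diag_def)
  finally show ?thesis .
qed

lemma hom_diag_hom_off: "k \<noteq> i \<Longrightarrow> hom_diag i ** hom_off i k = hom_off i k"
  using hom_diag_eq hom_off_triple[of i k] by simp

lemma hom_off_hom_diag: "k \<noteq> i \<Longrightarrow> hom_off k i ** hom_diag i = hom_off k i"
  using hom_diag_eq hom_off_triple[of k i] by (simp add: matrix_mul_assoc)

lemma hom_diag_anti_off: "k \<noteq> i \<Longrightarrow> hom_diag i ** anti_off k i = 0"
  using hom_diag_eq hom_off_anti_off(1)[of k i] by (simp flip: matrix_mul_assoc)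

lemma anti_off_hom_diag: "k \<noteq> i \<Longrightarrow> anti_off i k ** hom_diag i = 0"
  using hom_diag_eq hom_off_anti_off(2)[of i k] by (simp add: matrix_mul_assoc)

lemma diag_idem_hom_diag:
  "diag_idem i ** hom_diag i = hom_diag i"
  "hom_diag i ** diag_idem i = hom_diag i"
  using other_neq[of i]
  by (simp_all add: hom_diag_def hom_off_def matrix_mul_assoc del: off_diag_corner_left_mult)

lemma hom_off_diag_map: "i \<noteq> j \<Longrightarrow> hom_off i j ** diag_map j c = diag_map i c ** hom_off i j"
  using hom_corner_diag_left hom_corner_diag_right by metis

lemma anti_off_diag_map: "i \<noteq> j \<Longrightarrow> anti_off j i ** diag_map j c = diag_map i c ** anti_off j i"
  using anti_corner_diag_left[of j i c] anti_corner_diag_right[of j i c] by simp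

lemma hom_diag_diag_map: "hom_diag i ** diag_map i c = diag_map i c ** hom_diag i"
proof -
  let ?k = "other i"
  have k: "?k \<noteq> i" by (rule other_neq)
  have "hom_diag i ** diag_map i c = hom_off i ?k ** (hom_off ?k i ** diag_map i c)"
    by (simp add: hom_diag_def matrix_mul_assoc)
  also have "\<dots> = hom_off i ?k ** diag_map ?k c ** hom_off ?k i"
    using hom_off_diag_map[of ?k i c] k by (simp add: matrix_mul_assoc)
  also have "\<dots> = diag_map i c ** hom_off i ?k ** hom_off ?k i"
    using hom_off_diag_map[of i ?k c] k by simp
  also have "\<dots> = diag_map i c ** hom_diag i"
    by (simp add: hom_diag_def matrix_mul_assoc)
  finally show ?thesis .
qed

lemma diag_map_mult_hom_off:
  assumes "k \<noteq> i"
  shows "diag_map i (a * b) ** hom_off i k = diag_map i a ** diag_map i b ** hom_off i k"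
proof -
  have "diag_map i (a * b) ** hom_off i k = hom_corner i k (a * b)"
    using hom_corner_diag_left assms by simp
  also have "\<dots> = hom_corner i k a ** diag_map k b"
    using hom_corner_mult assms by simp
  also have "\<dots> = diag_map i a ** (hom_off i k ** diag_map k b)"
    using hom_corner_diag_left[of i k a] assms by (simp add: matrix_mul_assoc)
  also have "\<dots> = diag_map i a ** diag_map i b ** hom_off i k"
    using hom_off_diag_map[of i k b] assms by (simp add: matrix_mul_assoc)
  finally show ?thesis .
qed

lemma diag_map_mult_anti_off:
  assumes "k \<noteq> i"
  shows "diag_map i (a * b) ** anti_off k i = diag_map i a ** diag_map i b ** anti_off k i"
proof -
  have "diag_map i (a * b) ** anti_off k i = anti_corner k i (a * b)"
    using anti_corner_diag_left[of k i] assms by simp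
  also have "\<dots> = diag_map i a ** anti_corner k i b"
    using anti_corner_mult[of i k] assms by simp
  also have "\<dots> = diag_map i a ** diag_map i b ** anti_off k i"
    using anti_corner_diag_left[of k i b] assms by (simp add: matrix_mul_assoc)
  finally show ?thesis .
qed

lemma diag_map_mult: "diag_map i (a * b) = diag_map i a ** diag_map i b"
proof -
  let ?k = "other i"
  have k: "?k \<noteq> i" by (rule other_neq)
  let ?e = "hom_off i ?k ** hom_off ?k i + anti_off ?k i ** anti_off i ?k"
  have e: "?e = diag_idem i"
    using diag_idem_decomposition[OF not_sym[OF k]] by simp
  have "diag_map i (a * b) = diag_map i (a * b) ** ?e"
    by (simp only: e diag_map_corner)
  also have "\<dots> = diag_map i a ** diag_map i b ** ?e"
    using diag_map_mult_hom_off[OF k] diag_map_mult_anti_off[OF k]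
    by (simp add: matrix_add_ldistrib matrix_mul_assoc)
  also have "\<dots> = diag_map i a ** diag_map i b"
    by (simp only: e diag_map_corner matrix_mul_assoc[symmetric])
  finally show ?thesis .
qed

definition hom_unit :: "'n \<Rightarrow> 'n \<Rightarrow> 'a^'r^'r" where
  "hom_unit i j = (if i = j then hom_diag i else hom_off i j)"

definition anti_unit :: "'n \<Rightarrow> 'n \<Rightarrow> 'a^'r^'r" where
  "anti_unit i j = (if i = j then diag_idem i - hom_diag i else anti_off i j)"

lemma hom_off_corner:
  "i \<noteq> j \<Longrightarrow> diag_idem i ** hom_off i j = hom_off i j"
  "i \<noteq> j \<Longrightarrow> hom_off i j ** diag_idem j = hom_off i j"
  by (simp_all add: hom_off_def)

lemma anti_off_corner:
  "i \<noteq> j \<Longrightarrow> diag_idem j ** anti_off i j = anti_off i j"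
  "i \<noteq> j \<Longrightarrow> anti_off i j ** diag_idem i = anti_off i j"
  by (simp_all add: anti_off_def)

lemma hom_unit_diag_map: "hom_unit i j ** diag_map j c = diag_map i c ** hom_unit i j"
  by (cases "i = j") (simp_all add: hom_unit_def hom_diag_diag_map hom_off_diag_map)

lemma anti_unit_diag_map: "anti_unit j i ** diag_map j c = diag_map i c ** anti_unit j i"
  by (cases "i = j")
     (simp_all add: anti_unit_def matrix_diff_rdistrib matrix_diff_ldistrib hom_diag_diag_map
        anti_off_diag_map)

lemma hom_unit_anti_unit: "hom_unit i j ** anti_unit k j = 0"
proof -
  consider "i = j" "k = j" | "i = j" "k \<noteq> j" | "i \<noteq> j" "k = j" | "i \<noteq> j" "k \<noteq> j" "i = k"
    | "i \<noteq> j" "k \<noteq> j" "i \<noteq> k"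
    by blast
  then show ?thesis
    by cases
      (simp_all add: hom_unit_def anti_unit_def matrix_diff_ldistrib diag_idem_hom_diag
        hom_diag_idempotent hom_diag_anti_off hom_off_hom_diag hom_off_corner hom_off_anti_off
        hom_off_anti_off_eq_0)
qed

lemma anti_unit_hom_unit: "anti_unit j i ** hom_unit j k = 0"
proof -
  consider "j = i" "k = j" | "j = i" "k \<noteq> j" | "j \<noteq> i" "k = j" | "j \<noteq> i" "k \<noteq> j" "i = k"
    | "j \<noteq> i" "k \<noteq> j" "i \<noteq> k"
    by blast
  then show ?thesis
    by cases
      (simp_all add: hom_unit_def anti_unit_def matrix_diff_rdistrib diag_idem_hom_diag
        hom_diag_idempotent hom_diag_hom_off anti_off_hom_diag hom_off_corner hom_off_anti_off
        anti_off_hom_off_eq_0)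
qed

lemma hom_unit_trans: "hom_unit i j ** hom_unit j k = hom_unit i k"
proof -
  consider "i = j" | "i \<noteq> j" "j = k" | "i \<noteq> j" "j \<noteq> k" "i = k" | "i \<noteq> j" "j \<noteq> k" "i \<noteq> k"
    by blast
  then show ?thesis
    by cases
      (simp_all add: hom_unit_def hom_diag_idempotent hom_diag_hom_off hom_off_hom_diag hom_off_trans
        hom_diag_eq[symmetric])
qed

lemma anti_off_anti_off_diag:
  "i \<noteq> j \<Longrightarrow> anti_off j i ** anti_off i j = diag_idem i - hom_diag i"
  using diag_idem_decomposition[of i j] hom_diag_eq[of j i] by (simp add: algebra_simps)

lemma anti_unit_trans: "anti_unit j i ** anti_unit k j = anti_unit k i"
proof -
  consider "j = i" "k = j" | "j = i" "k \<noteq> j" | "j \<noteq> i" "k = j" | "j \<noteq> i" "k \<noteq> j" "k = i"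
    | "j \<noteq> i" "k \<noteq> j" "k \<noteq> i"
    by blast
  then show ?thesis
    by cases
      (simp_all add: anti_unit_def matrix_diff_rdistrib matrix_diff_ldistrib diag_idem_hom_diag
        hom_diag_idempotent hom_diag_anti_off anti_off_hom_diag anti_off_corner anti_off_anti_off_diag
        anti_off_trans)
qed

lemma corner_map_matrix_unit:
  "diag_idem i ** map_unit p q c ** diag_idem j =
     (if i = p \<and> j = q then diag_map i c ** hom_unit i j else 0)
   + (if j = p \<and> i = q then diag_map i c ** anti_unit j i else 0)"
proof -
  consider (hom) "p = i" "q = j" | (anti) "p = j" "q = i" "i \<noteq> j"
    | (none) "\<not> (i = p \<and> j = q)" "\<not> (j = p \<and> i = q)"
    by blast
  then show ?thesis
  proof cases
    case hom
    show ?thesis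
    proof (cases "i = j")
      case True
      have "diag_map i c ** hom_unit i i + diag_map i c ** anti_unit i i = diag_map i c"
        by (simp add: hom_unit_def anti_unit_def flip: matrix_add_ldistrib)
      with True hom show ?thesis by (simp add: diag_map_def[symmetric])
    next
      case False
      with hom hom_corner_diag_left[of i j c] show ?thesis
        by (simp add: hom_corner_def[symmetric] hom_unit_def)
    qed
  next
    case anti
    with anti_corner_diag_left[of j i c] show ?thesis
      by (simp add: anti_corner_def[symmetric] anti_unit_def)
  next
    case none
    then consider "i \<noteq> p" "i \<noteq> q" | "j \<noteq> p" "j \<noteq> q"
      | "j = i" "q \<noteq> i" "p = i" | "j = i" "p \<noteq> i" "q = i"
      by blast
    then have "diag_idem i ** map_unit p q c ** diag_idem j = 0"
      by cases (simp_all add: diag_idem_annihilates off_diag_corner(1) off_diag_corner(3))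
    with none show ?thesis by (simp only: if_False add_0)
  qed
qed

lemma corner_map:
  "diag_idem i ** \<phi> A ** diag_idem j =
     diag_map i (A $ i $ j) ** hom_unit i j + diag_map i (A $ j $ i) ** anti_unit j i"
proof -
  have "diag_idem i ** \<phi> A ** diag_idem j =
      (\<Sum>p\<in>UNIV. \<Sum>q\<in>UNIV. diag_idem i ** map_unit p q (A $ p $ q) ** diag_idem j)"
    by (subst matrix_eq_sum_matrix_units[of A])
       (simp add: map_sum matrix_sum_mult_distrib matrix_mult_sum_distrib)
  also have "\<dots> =
      (\<Sum>p\<in>UNIV. \<Sum>q\<in>UNIV. if i = p \<and> j = q then diag_map i (A $ p $ q) ** hom_unit i j else 0)
    + (\<Sum>p\<in>UNIV. \<Sum>q\<in>UNIV. if j = p \<and> i = q then diag_map i (A $ p $ q) ** anti_unit j i else 0)"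
    unfolding corner_map_matrix_unit by (simp add: sum.distrib)
  also have "\<dots> = diag_map i (A $ i $ j) ** hom_unit i j + diag_map i (A $ j $ i) ** anti_unit j i"
    by (simp only: sum_sum_delta[where F = "\<lambda>p q. diag_map i (A $ p $ q) ** hom_unit i j"]
                   sum_sum_delta[where F = "\<lambda>p q. diag_map i (A $ p $ q) ** anti_unit j i"])
  finally show ?thesis .
qed

lemma unit_mult_right_assoc:
  "hom_unit i j ** (diag_map j c ** X) = diag_map i c ** (hom_unit i j ** X)"
  "anti_unit j i ** (diag_map j c ** X) = diag_map i c ** (anti_unit j i ** X)"
  "diag_map i a ** (diag_map i b ** X) = diag_map i (a * b) ** X"
  "hom_unit i j ** (anti_unit k j ** X) = 0"
  "anti_unit j i ** (hom_unit j k ** X) = 0"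
  "hom_unit i j ** (hom_unit j k ** X) = hom_unit i k ** X"
  "anti_unit j i ** (anti_unit k j ** X) = anti_unit k i ** X"
  by (simp_all add: matrix_mul_assoc hom_unit_diag_map anti_unit_diag_map diag_map_mult
      hom_unit_anti_unit anti_unit_hom_unit hom_unit_trans anti_unit_trans)

lemma corner_product:
  "(diag_map i a ** hom_unit i j + diag_map i a' ** anti_unit j i)
     ** (diag_map j b ** hom_unit j k + diag_map j b' ** anti_unit k j)
   = diag_map i (a * b) ** hom_unit i k + diag_map i (a' * b') ** anti_unit k i"
  by (simp add: matrix_add_ldistrib matrix_add_rdistrib unit_mult_right_assoc hom_unit_anti_unit
      anti_unit_hom_unit hom_unit_trans anti_unit_trans flip: matrix_mul_assoc)

lemma corner_map_product:
  "diag_idem i ** (\<phi> A ** \<phi> B) ** diag_idem k =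
     diag_map i ((A ** B) $ i $ k) ** hom_unit i k + diag_map i ((B ** A) $ k $ i) ** anti_unit k i"
proof -
  have "diag_idem i ** (\<phi> A ** \<phi> B) ** diag_idem k =
      diag_idem i ** \<phi> A ** (\<phi> (mat 1) ** \<phi> B) ** diag_idem k"
    by (simp add: map_mat_1_left matrix_mul_assoc)
  also have "\<dots> = (\<Sum>j\<in>UNIV. diag_idem i ** \<phi> A ** diag_idem j ** \<phi> B ** diag_idem k)"
    unfolding map_mat_1_eq_sum
    by (simp add: matrix_sum_mult_distrib matrix_mult_sum_distrib matrix_mul_assoc
        del: diag_idem_idempotent)
  also have "\<dots> = (\<Sum>j\<in>UNIV. (diag_idem i ** \<phi> A ** diag_idem j) ** (diag_idem j ** \<phi> B ** diag_idem k))"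
    by (simp add: matrix_mul_assoc)
  also have "\<dots> = (\<Sum>j\<in>UNIV. diag_map i (A $ i $ j * B $ j $ k) ** hom_unit i k
                            + diag_map i (B $ k $ j * A $ j $ i) ** anti_unit k i)"
    unfolding corner_map corner_product by (simp add: mult.commute)
  also have "\<dots> =
      diag_map i ((A ** B) $ i $ k) ** hom_unit i k + diag_map i ((B ** A) $ k $ i) ** anti_unit k i"
    by (simp only: sum.distrib matrix_sum_mult_distrib[symmetric] diag_map_sum[symmetric]
        matrix_mult_component)
  finally show ?thesis .
qed

lemma map_double_zero_product_ge_2:
  assumes "A ** B = 0" "B ** A = 0"
  shows "\<phi> A ** \<phi> B = 0"
proof -
  have corners: "diag_idem i ** (\<phi> A ** \<phi> B) ** diag_idem k = 0" for i k
    unfolding corner_map_product using assms by simp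
  have "\<phi> A ** \<phi> B = (\<phi> (mat 1) ** \<phi> A) ** (\<phi> B ** \<phi> (mat 1))"
    by (simp only: map_mat_1_left map_mat_1_right)
  also have "\<dots> = \<phi> (mat 1) ** (\<phi> A ** \<phi> B) ** \<phi> (mat 1)"
    by (simp only: matrix_mul_assoc)
  also have "\<dots> = (\<Sum>k\<in>UNIV. \<Sum>i\<in>UNIV. diag_idem i ** (\<phi> A ** \<phi> B) ** diag_idem k)"
    unfolding map_mat_1_eq_sum by (simp add: matrix_sum_mult_distrib matrix_mult_sum_distrib)
  also have "\<dots> = 0" by (simp add: corners)
  finally show ?thesis .
qed

end

lemma matrix_mult_eq_0_single_index:
  fixes A B :: "'a::{semiring_1, semiring_no_zero_divisors}^'n::finite^'n"
  assumes single: "\<And>a b::'n. a = b" and "A ** B = 0"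
  shows "A = 0 \<or> B = 0"
proof -
  obtain i :: 'n where univ: "UNIV = {i}" using single by blast
  have "A $ i $ i * B $ i $ i = (A ** B) $ i $ i" by (simp add: matrix_mult_component univ)
  with \<open>A ** B = 0\<close> have "A $ i $ i * B $ i $ i = 0" by simp
  moreover have "M = 0" if "M $ i $ i = 0" for M :: "'a^'n^'n"
    using that single by (metis (full_types) vec_eq_iff zero_index)
  ultimately show ?thesis by auto
qed

context field_jordan_hom
begin

lemma map_double_zero_product:
  assumes "A ** B = 0" "B ** A = 0"
  shows "\<phi> A ** \<phi> B = 0"
proof (cases "\<exists>a b::'n. a \<noteq> b")
  case True
  interpret field_jordan_hom_ge_2 \<phi> by unfold_locales (rule True)
  show ?thesis using assms by (rule map_double_zero_product_ge_2)
next
  case False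
  then have "A = 0 \<or> B = 0" using matrix_mult_eq_0_single_index assms(1) by blast
  then show ?thesis by auto
qed

end

lemma symmetric_mat_zero_product_commute:
  fixes A B :: "'a::comm_semiring_1^'n::finite^'n"
  assumes "symmetric_mat A" "symmetric_mat B" "A ** B = 0"
  shows "B ** A = 0"
proof -
  have "B ** A = transpose (A ** B)"
    using assms(1,2) by (simp add: matrix_transpose_mul symmetric_mat_def)
  with assms(3) show ?thesis by (simp add: transpose_def vec_eq_iff)
qed

lemma self_adjoint_zero_product_commute:
  fixes A B :: "complex^'n::finite^'n"
  assumes "self_adjoint A" "self_adjoint B" "A ** B = 0"
  shows "B ** A = 0"
proof -
  have adj: "M $ i $ j = cnj (M $ j $ i)" if "self_adjoint M" for M :: "complex^'n^'n" and i j
    using that unfolding self_adjoint_def conj_transpose_def by (metis vec_lambda_beta)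
  have "(B ** A) $ i $ j = cnj ((A ** B) $ j $ i)" for i j
    by (simp add: matrix_mult_component adj[OF assms(1), of j] adj[OF assms(2), of _ i] mult.commute)
  with assms(3) show ?thesis by (simp add: vec_eq_iff)
qed

lemma jordan_hom_double_zero_product:
  fixes \<Phi> :: "'a::field^'n::finite^'n \<Rightarrow> 'a^'r::finite^'r"
  assumes "(2::'a) \<noteq> 0" "jordan_hom \<Phi>" "A ** B = 0" "B ** A = 0"
  shows "\<Phi> A ** \<Phi> B = 0"
  using field_jordan_hom.map_double_zero_product[OF field_jordan_hom.intro] assms by blast

theorem lemma4p1:
  shows "(\<forall>(\<Phi> :: 'a::field^'n::finite^'n \<Rightarrow> 'a^'r::finite^'r).
            (2::'a) \<noteq> 0 \<longrightarrow> jordan_hom \<Phi> \<longrightarrow>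
            (\<forall>A B. A ** B = 0 \<and> B ** A = 0 \<longrightarrow>
                   \<Phi> A ** \<Phi> B = 0 \<and> \<Phi> B ** \<Phi> A = 0))
       \<and> (\<forall>(\<Phi> :: real^'n^'n \<Rightarrow> real^'r^'r). jordan_hom \<Phi> \<longrightarrow>
            (\<forall>A B. A ** B = 0 \<and> B ** A = 0 \<longrightarrow>
                   \<Phi> A ** \<Phi> B = 0 \<and> \<Phi> B ** \<Phi> A = 0)
            \<and> (\<forall>A B. symmetric_mat A \<and> symmetric_mat B \<and> A ** B = 0 \<longrightarrow> \<Phi> A ** \<Phi> B = 0))
       \<and> (\<forall>(\<Phi> :: complex^'n^'n \<Rightarrow> complex^'r^'r). jordan_hom \<Phi> \<longrightarrow>
            (\<forall>A B. A ** B = 0 \<and> B ** A = 0 \<longrightarrow>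
                   \<Phi> A ** \<Phi> B = 0 \<and> \<Phi> B ** \<Phi> A = 0)
            \<and> (\<forall>A B. self_adjoint A \<and> self_adjoint B \<and> A ** B = 0 \<longrightarrow> \<Phi> A ** \<Phi> B = 0)
            \<and> (\<forall>A B. symmetric_mat A \<and> symmetric_mat B \<and> A ** B = 0 \<longrightarrow> \<Phi> A ** \<Phi> B = 0))"
  by (intro conjI allI impI; elim conjE;
      simp add: jordan_hom_double_zero_product symmetric_mat_zero_product_commute
        self_adjoint_zero_product_commute)

end
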